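(* Let $I$ be an $\mathfrak m$-primary ideal of $R$ and let $r>0$ with $\mathfrak m^r\subset I$. Then for all integers $k,m\ge r$, $I^{(m)}/A^{(m)}=I^{(k)}/A^{(k)}$ as elements of the Grothendieck group $\mathbf G(X)$.
   Context: $\mathbf{k}$ is algebraically closed; $X\subset\mathbb{A}^N$ is an affine variety over $\mathbf k$ (possibly reducible) whose irreducible components $X_1,\ldots,X_r$ all have dimension $n$, containing the origin $o$; $R=\mathcal O_{X,o}$ with maximal ideal $\mathfrak m$. $A^{(m)}\subset R$: restrictions to $X$ of polynomials of degree $\le m$; $I^{(m)}=A^{(m)}\cap I$. $\mathbf K(X)$: finite-dimensional $\mathbf k$-subspaces of the algebra $\mathbf k(X)$ of rational functions with nonzero restriction to each $X_i$, identified when their restrictions to each $X_i$ coincide; a commutative semigroup under $LM=\operatorname{span}\{fg\}$. $\mathbf G(X)$: its Grothendieck group, i.e. formal quotients of $\mathbf K(X)/\!\sim$ where $L\sim M$ iff $LN=MN$ for some $N\in\mathbf K(X)$. *)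

theory Defs
  imports "HOL-Computational_Algebra.Polynomial" "HOL-Analysis.Finite_Cartesian_Product"
begin

text \<open>Ambient space: the affine space over the field 'k with coordinates indexed by
  the finite type 'n (so N = CARD('n)).  The origin o is the zero vector.\<close>

definition tdeg :: "('n::finite \<Rightarrow> nat) \<Rightarrow> nat" where
  "tdeg \<alpha> = (\<Sum>i\<in>UNIV. \<alpha> i)"

definition monom_fun :: "('n::finite \<Rightarrow> nat) \<Rightarrow> 'k::field ^ 'n \<Rightarrow> 'k" where
  "monom_fun \<alpha> x = (\<Prod>i\<in>UNIV. (x $ i) ^ (\<alpha> i))"

definition polyfun_deg :: "nat \<Rightarrow> ('k::field ^ 'n::finite \<Rightarrow> 'k) set" where
  "polyfun_deg m = {p. \<exists>c. p = (\<lambda>x. \<Sum>\<alpha>\<in>{\<alpha>::'n \<Rightarrow> nat. tdeg \<alpha> \<le> m}. c \<alpha> * monom_fun \<alpha> x)}"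

definition polyfun :: "('k::field ^ 'n::finite \<Rightarrow> 'k) set" where
  "polyfun = (\<Union>m. polyfun_deg m)"

definition zero_set :: "('k::field ^ 'n::finite \<Rightarrow> 'k) set \<Rightarrow> ('k ^ 'n) set" where
  "zero_set S = {x. \<forall>p\<in>S. p x = 0}"

definition zclosed :: "('k::field ^ 'n::finite) set \<Rightarrow> bool" where
  "zclosed Y \<longleftrightarrow> (\<exists>S. S \<subseteq> polyfun \<and> Y = zero_set S)"

definition affine_variety :: "('k::field ^ 'n::finite) set \<Rightarrow> bool" where
  "affine_variety X \<longleftrightarrow> zclosed X \<and> X \<noteq> {}"

definition zirreducible :: "('k::field ^ 'n::finite) set \<Rightarrow> bool" where
  "zirreducible Y \<longleftrightarrow> zclosed Y \<and> Y \<noteq> {} \<and>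
     (\<forall>Z1 Z2. zclosed Z1 \<and> zclosed Z2 \<and> Y \<subseteq> Z1 \<union> Z2 \<longrightarrow> Y \<subseteq> Z1 \<or> Y \<subseteq> Z2)"

definition irr_components :: "('k::field ^ 'n::finite) set \<Rightarrow> ('k ^ 'n) set set" where
  "irr_components X = {Y. Y \<subseteq> X \<and> zirreducible Y \<and>
      (\<forall>Z. zirreducible Z \<and> Y \<subseteq> Z \<and> Z \<subseteq> X \<longrightarrow> Z = Y)}"

definition irr_chain :: "(nat \<Rightarrow> ('k::field ^ 'n::finite) set) \<Rightarrow> nat \<Rightarrow> ('k ^ 'n) set \<Rightarrow> bool" where
  "irr_chain c d Y \<longleftrightarrow> (\<forall>i\<le>d. zirreducible (c i)) \<and> (\<forall>i<d. c i \<subset> c (Suc i)) \<and> c d \<subseteq> Y"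

definition has_dim :: "('k::field ^ 'n::finite) set \<Rightarrow> nat \<Rightarrow> bool" where
  "has_dim Y n \<longleftrightarrow> (\<exists>c. irr_chain c n Y) \<and> \<not> (\<exists>c. irr_chain c (Suc n) Y)"

text \<open>A rational function on X is a class of pairs (f,g) of polynomial functions with g
  not identically zero on any irreducible component (i.e. a non-zero-divisor of k[X]),
  where (f,g) ~ (f',g') iff f g' = f' g on X.\<close>

type_synonym ('k,'n) fpair = "('k ^ 'n \<Rightarrow> 'k) \<times> ('k ^ 'n \<Rightarrow> 'k)"
type_synonym ('k,'n) ratfun = "('k,'n) fpair set"

definition ratfun_pairs :: "('k::field ^ 'n::finite) set \<Rightarrow> ('k,'n) fpair set" where
  "ratfun_pairs X = {(f,g). f \<in> polyfun \<and> g \<in> polyfun \<and> (\<forall>Y\<in>irr_components X. \<exists>y\<in>Y. g y \<noteq> 0)}"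

definition ratcls :: "('k::field ^ 'n::finite) set \<Rightarrow> ('k,'n) fpair \<Rightarrow> ('k,'n) ratfun" where
  "ratcls X p = {q \<in> ratfun_pairs X. \<forall>x\<in>X. fst p x * snd q x = fst q x * snd p x}"

definition ratfuns :: "('k::field ^ 'n::finite) set \<Rightarrow> ('k,'n) ratfun set" where
  "ratfuns X = ratcls X ` ratfun_pairs X"

definition rep :: "('k::field,'n::finite) ratfun \<Rightarrow> ('k,'n) fpair" where
  "rep a = (SOME p. p \<in> a)"

definition rat_zero :: "('k::field ^ 'n::finite) set \<Rightarrow> ('k,'n) ratfun" where
  "rat_zero X = ratcls X (\<lambda>_. 0, \<lambda>_. 1)"

definition rat_one :: "('k::field ^ 'n::finite) set \<Rightarrow> ('k,'n) ratfun" where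
  "rat_one X = ratcls X (\<lambda>_. 1, \<lambda>_. 1)"

definition rat_add :: "('k::field ^ 'n::finite) set \<Rightarrow> ('k,'n) ratfun \<Rightarrow> ('k,'n) ratfun \<Rightarrow> ('k,'n) ratfun" where
  "rat_add X a b = ratcls X (\<lambda>x. fst (rep a) x * snd (rep b) x + fst (rep b) x * snd (rep a) x,
                             \<lambda>x. snd (rep a) x * snd (rep b) x)"

definition rat_mult :: "('k::field ^ 'n::finite) set \<Rightarrow> ('k,'n) ratfun \<Rightarrow> ('k,'n) ratfun \<Rightarrow> ('k,'n) ratfun" where
  "rat_mult X a b = ratcls X (\<lambda>x. fst (rep a) x * fst (rep b) x, \<lambda>x. snd (rep a) x * snd (rep b) x)"

definition rat_smult :: "('k::field ^ 'n::finite) set \<Rightarrow> 'k \<Rightarrow> ('k,'n) ratfun \<Rightarrow> ('k,'n) ratfun" where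
  "rat_smult X c a = ratcls X (\<lambda>x. c * fst (rep a) x, snd (rep a))"

fun rat_pow :: "('k::field ^ 'n::finite) set \<Rightarrow> ('k,'n) ratfun \<Rightarrow> nat \<Rightarrow> ('k,'n) ratfun" where
  "rat_pow X a 0 = rat_one X"
| "rat_pow X a (Suc k) = rat_mult X a (rat_pow X a k)"

inductive_set rspan :: "('k::field ^ 'n::finite) set \<Rightarrow> ('k,'n) ratfun set \<Rightarrow> ('k,'n) ratfun set"
  for X S where
  zero: "rat_zero X \<in> rspan X S"
| base: "s \<in> S \<Longrightarrow> s \<in> rspan X S"
| add: "a \<in> rspan X S \<Longrightarrow> b \<in> rspan X S \<Longrightarrow> rat_add X a b \<in> rspan X S"
| smult: "a \<in> rspan X S \<Longrightarrow> rat_smult X c a \<in> rspan X S"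

definition nonzero_on :: "('k::field ^ 'n::finite) set \<Rightarrow> ('k,'n) ratfun \<Rightarrow> bool" where
  "nonzero_on Y a \<longleftrightarrow> (\<exists>(f,g)\<in>a. \<exists>y\<in>Y. f y \<noteq> 0)"

definition KX :: "('k::field ^ 'n::finite) set \<Rightarrow> ('k,'n) ratfun set set" where
  "KX X = {L. L \<subseteq> ratfuns X \<and> rspan X L = L \<and>
              (\<exists>F. finite F \<and> F \<subseteq> L \<and> rspan X F = L) \<and>
              (\<forall>Y\<in>irr_components X. \<exists>a\<in>L. nonzero_on Y a)}"

definition sprod :: "('k::field ^ 'n::finite) set \<Rightarrow> ('k,'n) ratfun set \<Rightarrow> ('k,'n) ratfun set \<Rightarrow> ('k,'n) ratfun set" where
  "sprod X L M = rspan X {rat_mult X a b | a b. a \<in> L \<and> b \<in> M}"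

text \<open>Equality of the formal quotients L/M and L'/M' in G(X): by definition of the
  Grothendieck group of K(X) (quotient by L ~ M iff LN = MN for some N), this holds iff
  L M' ~ L' M, i.e. L M' N = L' M N for some N in K(X).\<close>
definition G_eq :: "('k::field ^ 'n::finite) set \<Rightarrow> ('k,'n) ratfun set \<Rightarrow> ('k,'n) ratfun set \<Rightarrow>
                     ('k,'n) ratfun set \<Rightarrow> ('k,'n) ratfun set \<Rightarrow> bool" where
  "G_eq X L M L' M' \<longleftrightarrow> (\<exists>N\<in>KX X. sprod X (sprod X L M') N = sprod X (sprod X L' M) N)"

definition loc_ring :: "('k::field ^ 'n::finite) set \<Rightarrow> ('k,'n) ratfun set" where
  "loc_ring X = {a \<in> ratfuns X. \<exists>(f,g)\<in>a. g 0 \<noteq> 0}"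

definition max_ideal :: "('k::field ^ 'n::finite) set \<Rightarrow> ('k,'n) ratfun set" where
  "max_ideal X = {a \<in> ratfuns X. \<exists>(f,g)\<in>a. g 0 \<noteq> 0 \<and> f 0 = 0}"

definition is_ideal :: "('k::field ^ 'n::finite) set \<Rightarrow> ('k,'n) ratfun set \<Rightarrow> bool" where
  "is_ideal X I \<longleftrightarrow> I \<subseteq> loc_ring X \<and> rat_zero X \<in> I \<and>
     (\<forall>a\<in>I. \<forall>b\<in>I. rat_add X a b \<in> I) \<and>
     (\<forall>r\<in>loc_ring X. \<forall>a\<in>I. rat_mult X r a \<in> I)"

definition is_primary_for :: "('k::field ^ 'n::finite) set \<Rightarrow> ('k,'n) ratfun set \<Rightarrow> ('k,'n) ratfun set \<Rightarrow> bool" where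
  "is_primary_for X P I \<longleftrightarrow> is_ideal X I \<and> I \<noteq> loc_ring X \<and>
     (\<forall>a\<in>loc_ring X. \<forall>b\<in>loc_ring X. rat_mult X a b \<in> I \<and> a \<notin> I \<longrightarrow> (\<exists>k. rat_pow X b k \<in> I)) \<and>
     {a \<in> loc_ring X. \<exists>k. rat_pow X a k \<in> I} = P"

fun mprods :: "('k::field ^ 'n::finite) set \<Rightarrow> nat \<Rightarrow> ('k,'n) ratfun set" where
  "mprods X 0 = {rat_one X}"
| "mprods X (Suc r) = {rat_mult X a p | a p. a \<in> max_ideal X \<and> p \<in> mprods X r}"

inductive_set ideal_gen :: "('k::field ^ 'n::finite) set \<Rightarrow> ('k,'n) ratfun set \<Rightarrow> ('k,'n) ratfun set"
  for X S where
  zero: "rat_zero X \<in> ideal_gen X S"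
| base: "s \<in> S \<Longrightarrow> s \<in> ideal_gen X S"
| add: "a \<in> ideal_gen X S \<Longrightarrow> b \<in> ideal_gen X S \<Longrightarrow> rat_add X a b \<in> ideal_gen X S"
| mult: "r \<in> loc_ring X \<Longrightarrow> a \<in> ideal_gen X S \<Longrightarrow> rat_mult X r a \<in> ideal_gen X S"

definition max_ideal_pow :: "('k::field ^ 'n::finite) set \<Rightarrow> nat \<Rightarrow> ('k,'n) ratfun set" where
  "max_ideal_pow X r = ideal_gen X (mprods X r)"

definition A_deg :: "('k::field ^ 'n::finite) set \<Rightarrow> nat \<Rightarrow> ('k,'n) ratfun set" where
  "A_deg X m = {ratcls X (p, \<lambda>_. 1) | p. p \<in> polyfun_deg m}"

definition I_deg :: "('k::field ^ 'n::finite) set \<Rightarrow> ('k,'n) ratfun set \<Rightarrow> nat \<Rightarrow> ('k,'n) ratfun set" where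
  "I_deg X I m = A_deg X m \<inter> I"

end

theory Submission
  imports Defs
begin

text \<open>For \<open>m, k \<ge> r\<close> the products \<open>I^(m) A^(k)\<close> and \<open>I^(k) A^(m)\<close> are both the span of
  \<open>I^(m+k)\<close>, so the two formal quotients agree already in \<open>K(X)\<close>, with any \<open>N\<close>, e.g. the span
  of \<open>1\<close>. A product of elements of \<open>I^(m)\<close> and \<open>A^(k)\<close> lies in \<open>I^(m+k)\<close> since \<open>I\<close> is an
  ideal and degrees add. Conversely, split \<open>p \<in> I^(m+k)\<close> into its part of degree \<open>< r\<close> and
  monomials of degree \<open>\<ge> r\<close>. These monomials lie in the \<open>r\<close>-th power of the maximal ideal, hence
  in \<open>I\<close>, so the low part lies in \<open>I\<close> and thus in \<open>I^(m)\<close>; and a monomial of degree \<open>d\<close> with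
  \<open>r \<le> d \<le> m + k\<close> is a monomial of degree \<open>min m d \<ge> r\<close>, which lies in \<open>I^(m)\<close>, times one
  of degree \<open>\<le> k\<close>.\<close>

section \<open>Polynomial functions\<close>

lemma finite_tdeg_le: "finite {\<alpha>::'n::finite \<Rightarrow> nat. tdeg \<alpha> \<le> m}"
proof -
  have "{\<alpha>::'n \<Rightarrow> nat. tdeg \<alpha> \<le> m} \<subseteq> Pi\<^sub>E UNIV (\<lambda>_. {..m})"
  proof
    fix \<alpha> :: "'n \<Rightarrow> nat" assume "\<alpha> \<in> {\<alpha>. tdeg \<alpha> \<le> m}"
    moreover have "\<alpha> i \<le> tdeg \<alpha>" for i
      unfolding tdeg_def by (rule member_le_sum) auto
    ultimately show "\<alpha> \<in> Pi\<^sub>E UNIV (\<lambda>_. {..m})" by (auto intro: order_trans)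
  qed
  thus ?thesis by (rule finite_subset) (simp add: finite_PiE)
qed

lemma tdeg_add: "tdeg (\<lambda>i. \<alpha> i + \<beta> i) = tdeg \<alpha> + tdeg \<beta>"
  unfolding tdeg_def by (simp add: sum.distrib)

lemma tdeg_eq_0_iff: "tdeg (\<alpha>::'n::finite \<Rightarrow> nat) = 0 \<longleftrightarrow> \<alpha> = (\<lambda>_. 0)"
  unfolding tdeg_def by (auto simp: fun_eq_iff)

lemma monom_fun_add: "monom_fun (\<lambda>i. \<alpha> i + \<beta> i) = (\<lambda>x. monom_fun \<alpha> x * monom_fun \<beta> x)"
  unfolding monom_fun_def by (simp add: power_add prod.distrib)

lemma monom_fun_zero: "monom_fun (\<lambda>_. 0) = (\<lambda>_. 1)"
  unfolding monom_fun_def by simp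

definition unit_exp :: "'n \<Rightarrow> 'n \<Rightarrow> nat" where
  "unit_exp i = (\<lambda>j. if j = i then 1 else 0)"

lemma tdeg_unit_exp: "tdeg (unit_exp (i::'n::finite)) = 1"
  unfolding tdeg_def unit_exp_def by simp

lemma monom_fun_unit_exp: "monom_fun (unit_exp i) = (\<lambda>x::'k::field^'n::finite. x $ i)"
proof
  fix x :: "'k^'n"
  have "monom_fun (unit_exp i) x = (\<Prod>j\<in>UNIV. if j = i then x $ j else 1)"
    unfolding monom_fun_def unit_exp_def by (intro prod.cong) auto
  also have "\<dots> = x $ i" by (simp add: prod.delta)
  finally show "monom_fun (unit_exp i) x = x $ i" .
qed

lemma unit_exp_split: "\<alpha> i > 0 \<Longrightarrow> \<alpha> = (\<lambda>j. unit_exp i j + (\<alpha>(i := \<alpha> i - 1)) j)"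
  unfolding unit_exp_def by (auto simp: fun_eq_iff)

lemma exponent_split_tdeg:
  assumes "j \<le> tdeg (\<alpha>::'n::finite \<Rightarrow> nat)"
  obtains \<beta> \<gamma> where "\<alpha> = (\<lambda>i. \<beta> i + \<gamma> i)" "tdeg \<beta> = j"
proof -
  have "\<exists>\<beta> \<gamma>. \<alpha> = (\<lambda>i. \<beta> i + \<gamma> i) \<and> tdeg \<beta> = j"
    using assms
  proof (induction j)
    case 0
    show ?case by (rule exI[of _ "\<lambda>_. 0"], rule exI[of _ \<alpha>]) (simp add: tdeg_eq_0_iff)
  next
    case (Suc j)
    then obtain \<beta> \<gamma> where \<alpha>: "\<alpha> = (\<lambda>i. \<beta> i + \<gamma> i)" and \<beta>: "tdeg \<beta> = j" by auto
    have "tdeg \<gamma> \<noteq> 0" using Suc.prems \<beta> unfolding \<alpha> tdeg_add by simp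
    then obtain i where i: "\<gamma> i > 0" by (metis gr0I tdeg_eq_0_iff)
    define \<gamma>' where "\<gamma>' = \<gamma>(i := \<gamma> i - 1)"
    have \<gamma>: "\<gamma> = (\<lambda>k. unit_exp i k + \<gamma>' k)" unfolding \<gamma>'_def by (rule unit_exp_split[where \<alpha> = \<gamma>, OF i])
    have "\<alpha> = (\<lambda>k. (\<beta> k + unit_exp i k) + \<gamma>' k)" unfolding \<alpha> by (subst \<gamma>) (simp add: add.assoc)
    moreover have "tdeg (\<lambda>k. \<beta> k + unit_exp i k) = Suc j" by (simp add: tdeg_add tdeg_unit_exp \<beta>)
    ultimately show ?case by (intro exI[of _ "\<lambda>k. \<beta> k + unit_exp i k"] exI[of _ \<gamma>'] conjI) simp_all
  qed
  with that show thesis by blast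
qed

lemma polyfun_degI: "p = (\<lambda>x. \<Sum>\<alpha>\<in>{\<alpha>. tdeg \<alpha> \<le> m}. c \<alpha> * monom_fun \<alpha> x) \<Longrightarrow> p \<in> polyfun_deg m"
  unfolding polyfun_deg_def by blast

lemma polyfun_degE:
  assumes "p \<in> polyfun_deg m"
  obtains c where "p = (\<lambda>x. \<Sum>\<alpha>\<in>{\<alpha>. tdeg \<alpha> \<le> m}. c \<alpha> * monom_fun \<alpha> x)"
  using assms unfolding polyfun_deg_def by blast

lemma polyfun_deg_sum_monoms:
  fixes e :: "'s \<Rightarrow> ('n::finite \<Rightarrow> nat)" and c :: "'s \<Rightarrow> 'k::field"
  assumes "finite S" "\<forall>s\<in>S. tdeg (e s) \<le> m"
  shows "(\<lambda>x::'k^'n. \<Sum>s\<in>S. c s * monom_fun (e s) x) \<in> polyfun_deg m"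
proof (rule polyfun_degI[where c = "\<lambda>\<alpha>. \<Sum>s\<in>{s\<in>S. e s = \<alpha>}. c s"], rule ext)
  fix x :: "'k^'n"
  have "(\<Sum>s\<in>S. c s * monom_fun (e s) x)
      = (\<Sum>\<alpha>\<in>{\<alpha>. tdeg \<alpha> \<le> m}. \<Sum>s\<in>{s\<in>S. e s = \<alpha>}. c s * monom_fun (e s) x)"
    by (rule sum.group[symmetric]) (use assms finite_tdeg_le in auto)
  also have "\<dots> = (\<Sum>\<alpha>\<in>{\<alpha>. tdeg \<alpha> \<le> m}. (\<Sum>s\<in>{s\<in>S. e s = \<alpha>}. c s) * monom_fun \<alpha> x)"
    by (auto simp: sum_distrib_right intro!: sum.cong)
  finally show "(\<Sum>s\<in>S. c s * monom_fun (e s) x)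
      = (\<Sum>\<alpha>\<in>{\<alpha>. tdeg \<alpha> \<le> m}. (\<Sum>s\<in>{s\<in>S. e s = \<alpha>}. c s) * monom_fun \<alpha> x)" .
qed

lemma polyfun_deg_mono:
  assumes "m \<le> m'" "p \<in> polyfun_deg m"
  shows "p \<in> polyfun_deg m'"
proof -
  obtain c where p: "p = (\<lambda>x. \<Sum>\<alpha>\<in>{\<alpha>. tdeg \<alpha> \<le> m}. c \<alpha> * monom_fun \<alpha> x)"
    using polyfun_degE[OF assms(2)] .
  show ?thesis
    unfolding p
    by (rule polyfun_deg_sum_monoms[where e = "\<lambda>\<alpha>. \<alpha>", simplified]) (use assms(1) finite_tdeg_le in auto)
qed

lemma polyfun_deg_monom: "tdeg \<alpha> \<le> m \<Longrightarrow> monom_fun \<alpha> \<in> polyfun_deg m"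
  using polyfun_deg_sum_monoms[of "{()}" "\<lambda>_. \<alpha>" m "\<lambda>_. 1"] by simp

lemma polyfun_deg_const: "(\<lambda>_. c) \<in> polyfun_deg m"
  using polyfun_deg_sum_monoms[of "{()}" "\<lambda>_. (\<lambda>_. 0)" m "\<lambda>_. c"]
  by (simp add: monom_fun_zero tdeg_def)

lemma polyfun_deg_add:
  assumes "p \<in> polyfun_deg m" "q \<in> polyfun_deg m"
  shows "(\<lambda>x. p x + q x) \<in> polyfun_deg m"
proof -
  obtain c where p: "p = (\<lambda>x. \<Sum>\<alpha>\<in>{\<alpha>. tdeg \<alpha> \<le> m}. c \<alpha> * monom_fun \<alpha> x)"
    using polyfun_degE[OF assms(1)] .
  obtain d where q: "q = (\<lambda>x. \<Sum>\<alpha>\<in>{\<alpha>. tdeg \<alpha> \<le> m}. d \<alpha> * monom_fun \<alpha> x)"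
    using polyfun_degE[OF assms(2)] .
  show ?thesis
    by (rule polyfun_degI[where c = "\<lambda>\<alpha>. c \<alpha> + d \<alpha>"])
       (simp add: p q sum.distrib[symmetric] distrib_right)
qed

lemma polyfun_deg_mult:
  fixes p q :: "'k::field^'n::finite \<Rightarrow> 'k"
  assumes "p \<in> polyfun_deg m" "q \<in> polyfun_deg m'"
  shows "(\<lambda>x. p x * q x) \<in> polyfun_deg (m + m')"
proof -
  obtain c where p: "p = (\<lambda>x. \<Sum>\<alpha>\<in>{\<alpha>. tdeg \<alpha> \<le> m}. c \<alpha> * monom_fun \<alpha> x)"
    using polyfun_degE[OF assms(1)] .
  obtain d where q: "q = (\<lambda>x. \<Sum>\<alpha>\<in>{\<alpha>. tdeg \<alpha> \<le> m'}. d \<alpha> * monom_fun \<alpha> x)"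
    using polyfun_degE[OF assms(2)] .
  define S where "S = {\<alpha>::'n\<Rightarrow>nat. tdeg \<alpha> \<le> m} \<times> {\<alpha>::'n\<Rightarrow>nat. tdeg \<alpha> \<le> m'}"
  have "(\<lambda>x. p x * q x)
      = (\<lambda>x. \<Sum>s\<in>S. (c (fst s) * d (snd s)) * monom_fun (\<lambda>i. fst s i + snd s i) x)"
    unfolding p q sum_product sum.cartesian_product S_def
    by (intro ext sum.cong) (auto simp: mult_ac monom_fun_add)
  also have "\<dots> \<in> polyfun_deg (m + m')"
    by (rule polyfun_deg_sum_monoms) (auto simp: S_def tdeg_add finite_tdeg_le)
  finally show ?thesis .
qed

lemma polyfun_deg_polyfun: "p \<in> polyfun_deg m \<Longrightarrow> p \<in> polyfun"
  unfolding polyfun_def by blast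

lemma polyfun_add:
  assumes "p \<in> polyfun" "q \<in> polyfun"
  shows "(\<lambda>x. p x + q x) \<in> polyfun"
proof -
  obtain a b where "p \<in> polyfun_deg a" "q \<in> polyfun_deg b"
    using assms unfolding polyfun_def by blast
  hence "p \<in> polyfun_deg (max a b)" "q \<in> polyfun_deg (max a b)"
    using polyfun_deg_mono[of a "max a b" p] polyfun_deg_mono[of b "max a b" q] by auto
  thus ?thesis by (blast intro: polyfun_deg_polyfun polyfun_deg_add)
qed

lemma polyfun_mult: "p \<in> polyfun \<Longrightarrow> q \<in> polyfun \<Longrightarrow> (\<lambda>x. p x * q x) \<in> polyfun"
  unfolding polyfun_def by (auto intro: polyfun_deg_mult)

lemma polyfun_const: "(\<lambda>_. c) \<in> polyfun"
  using polyfun_deg_polyfun[OF polyfun_deg_const] .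

lemma polyfun_monom: "monom_fun \<alpha> \<in> polyfun"
  using polyfun_deg_polyfun[OF polyfun_deg_monom[OF order_refl]] .

lemma polyfun_coord: "(\<lambda>x::'k::field^'n::finite. x $ i) \<in> polyfun"
  using polyfun_monom[of "unit_exp i"] by (simp add: monom_fun_unit_exp)

lemma polyfun_smult: "p \<in> polyfun \<Longrightarrow> (\<lambda>x. a * p x) \<in> polyfun"
  using polyfun_mult[OF polyfun_const] by blast

lemma polyfun_diff: "p \<in> polyfun \<Longrightarrow> q \<in> polyfun \<Longrightarrow> (\<lambda>x. p x - q x) \<in> polyfun"
  using polyfun_add[of p "\<lambda>x. (-1) * q x"] polyfun_smult[of q "-1"] by simp

lemma polyfun_sum_monoms: "finite T \<Longrightarrow> (\<lambda>x. \<Sum>t\<in>T. c t * monom_fun t x) \<in> polyfun"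
  by (rule polyfun_deg_polyfun, rule polyfun_deg_sum_monoms[where m = "Max (tdeg ` T)"]) auto

lemma polyfun_deg_split_low_high:
  fixes p :: "'k::field^'n::finite \<Rightarrow> 'k"
  assumes "r \<le> m" "p \<in> polyfun_deg d"
  obtains q c T where "q \<in> polyfun_deg m" "finite T" "\<forall>t\<in>T. r \<le> tdeg t \<and> tdeg t \<le> d"
    "p = (\<lambda>x. q x + (\<Sum>t\<in>T. c t * monom_fun t x))"
proof -
  obtain c where p: "p = (\<lambda>x. \<Sum>\<alpha>\<in>{\<alpha>. tdeg \<alpha> \<le> d}. c \<alpha> * monom_fun \<alpha> x)"
    using polyfun_degE[OF assms(2)] .
  define Low :: "('n \<Rightarrow> nat) set" where "Low = {\<alpha>. tdeg \<alpha> \<le> d \<and> tdeg \<alpha> < r}"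
  define High :: "('n \<Rightarrow> nat) set" where "High = {\<alpha>. tdeg \<alpha> \<le> d \<and> r \<le> tdeg \<alpha>}"
  have fin: "finite Low" "finite High"
    unfolding Low_def High_def by (auto intro: finite_subset[OF _ finite_tdeg_le])
  have "{\<alpha>. tdeg \<alpha> \<le> d} = Low \<union> High" "Low \<inter> High = {}"
    unfolding Low_def High_def by auto
  hence "p = (\<lambda>x. (\<Sum>\<alpha>\<in>Low. c \<alpha> * monom_fun \<alpha> x) + (\<Sum>t\<in>High. c t * monom_fun t x))"
    unfolding p by (simp add: sum.union_disjoint[OF fin])
  moreover have "(\<lambda>x. \<Sum>\<alpha>\<in>Low. c \<alpha> * monom_fun \<alpha> x) \<in> polyfun_deg m"
    using polyfun_deg_sum_monoms[OF fin(1), where e = "\<lambda>\<alpha>. \<alpha>" and m = m and c = c] assms(1) by (auto simp: Low_def)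
  ultimately show thesis
    using that fin(2) unfolding High_def by blast
qed

section \<open>Irreducible components\<close>

lemma zclosed_zero_locus: "g \<in> polyfun \<Longrightarrow> zclosed {x. g x = 0}"
  unfolding zclosed_def zero_set_def by (rule exI[of _ "{g}"]) auto

lemma zclosed_singleton: "zclosed {x::'k::field^'n::finite}"
proof -
  define S where "S = range (\<lambda>i. \<lambda>y::'k^'n. y $ i - x $ i)"
  have "S \<subseteq> polyfun"
    unfolding S_def using polyfun_diff[OF polyfun_coord polyfun_const] by blast
  moreover have "{x} = zero_set S"
    unfolding S_def zero_set_def by (auto simp: vec_eq_iff)
  ultimately show ?thesis unfolding zclosed_def by blast
qed

lemma zirreducible_singleton: "zirreducible {x::'k::field^'n::finite}"
  unfolding zirreducible_def using zclosed_singleton by auto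

lemma zirreducibleI:
  "zclosed Y \<Longrightarrow> Y \<noteq> {} \<Longrightarrow>
    (\<And>Z1 Z2. zclosed Z1 \<Longrightarrow> zclosed Z2 \<Longrightarrow> Y \<subseteq> Z1 \<union> Z2 \<Longrightarrow> Y \<subseteq> Z1 \<or> Y \<subseteq> Z2) \<Longrightarrow>
    zirreducible Y"
  unfolding zirreducible_def by blast

lemma zirreducibleD:
  "zirreducible Y \<Longrightarrow> zclosed Z1 \<Longrightarrow> zclosed Z2 \<Longrightarrow> Y \<subseteq> Z1 \<union> Z2 \<Longrightarrow> Y \<subseteq> Z1 \<or> Y \<subseteq> Z2"
  unfolding zirreducible_def by blast

lemma zirreducible_zero_product:
  assumes "zirreducible Y" "g \<in> polyfun" "h \<in> polyfun" "\<forall>y\<in>Y. g y * h y = 0"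
  shows "(\<forall>y\<in>Y. g y = 0) \<or> (\<forall>y\<in>Y. h y = 0)"
proof -
  have "Y \<subseteq> {x. g x = 0} \<union> {x. h x = 0}" using assms(4) by auto
  hence "Y \<subseteq> {x. g x = 0} \<or> Y \<subseteq> {x. h x = 0}"
    by (rule zirreducibleD[OF assms(1) zclosed_zero_locus[OF assms(2)] zclosed_zero_locus[OF assms(3)]])
  thus ?thesis by blast
qed

lemma irr_components_irreducible: "Y \<in> irr_components X \<Longrightarrow> zirreducible Y"
  unfolding irr_components_def by blast

lemma irr_components_subset: "Y \<in> irr_components X \<Longrightarrow> Y \<subseteq> X"
  unfolding irr_components_def by blast

lemma irr_components_nonempty: "Y \<in> irr_components X \<Longrightarrow> Y \<noteq> {}"
  unfolding irr_components_def zirreducible_def by blast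

definition zclosure :: "('k::field ^ 'n::finite) set \<Rightarrow> ('k ^ 'n) set" where
  "zclosure U = zero_set {p \<in> polyfun. \<forall>u\<in>U. p u = 0}"

lemma zclosed_zclosure: "zclosed (zclosure U)"
  unfolding zclosure_def zclosed_def by (rule exI[of _ "{p \<in> polyfun. \<forall>u\<in>U. p u = 0}"]) simp

lemma zclosure_superset: "U \<subseteq> zclosure U"
  unfolding zclosure_def zero_set_def by auto

lemma zclosure_least:
  assumes "zclosed Z" "U \<subseteq> Z"
  shows "zclosure U \<subseteq> Z"
proof
  fix z assume z: "z \<in> zclosure U"
  obtain S where S: "S \<subseteq> polyfun" "Z = zero_set S"
    using assms(1) unfolding zclosed_def by blast
  have "p z = 0" if "p \<in> S" for p
  proof -
    have "p \<in> {p \<in> polyfun. \<forall>u\<in>U. p u = 0}"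
      using assms(2) S that unfolding zero_set_def by blast
    thus ?thesis using z unfolding zclosure_def zero_set_def by blast
  qed
  thus "z \<in> Z" using S unfolding zero_set_def by blast
qed

lemma zirreducible_zclosure_Union_chain:
  assumes "C \<noteq> {}" and irr: "\<And>Z. Z \<in> C \<Longrightarrow> zirreducible Z"
    and chain: "\<And>U V. U \<in> C \<Longrightarrow> V \<in> C \<Longrightarrow> U \<subseteq> V \<or> V \<subseteq> U"
  shows "zirreducible (zclosure (\<Union>C))"
proof (rule zirreducibleI[OF zclosed_zclosure])
  obtain Z where "Z \<in> C" using assms(1) by blast
  moreover have "Z \<noteq> {}" using irr[OF \<open>Z \<in> C\<close>] unfolding zirreducible_def by simp
  ultimately show "zclosure (\<Union>C) \<noteq> {}" using zclosure_superset[of "\<Union>C"] by blast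
next
  fix Z1 Z2 assume Z: "zclosed Z1" "zclosed Z2" "zclosure (\<Union>C) \<subseteq> Z1 \<union> Z2"
  show "zclosure (\<Union>C) \<subseteq> Z1 \<or> zclosure (\<Union>C) \<subseteq> Z2"
  proof (cases "\<Union>C \<subseteq> Z1")
    case True thus ?thesis using zclosure_least[OF Z(1)] by blast
  next
    case False
    then obtain Z0 where Z0: "Z0 \<in> C" "\<not> Z0 \<subseteq> Z1" by blast
    have each: "W \<subseteq> Z1 \<or> W \<subseteq> Z2" if "W \<in> C" for W
      using zirreducibleD[OF irr[OF that] Z(1,2)] Z(3) zclosure_superset[of "\<Union>C"] that by blast
    have "W \<subseteq> Z2" if "W \<in> C" for W
      using chain[OF that Z0(1)] each[OF that] each[OF Z0(1)] Z0(2) by blast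
    hence "\<Union>C \<subseteq> Z2" by blast
    thus ?thesis using zclosure_least[OF Z(2)] by blast
  qed
qed

text \<open>Zorn's lemma on the irreducible closed subsets of \<open>X\<close> through \<open>x\<close>: a chain is bounded by
  the closure of its union.\<close>

lemma exists_irr_component:
  fixes X :: "('k::field ^ 'n::finite) set"
  assumes X: "zclosed X" and x: "x \<in> X"
  obtains Y where "Y \<in> irr_components X" "x \<in> Y"
proof -
  define A where "A = {Z. zirreducible Z \<and> x \<in> Z \<and> Z \<subseteq> X}"
  have "\<exists>U\<in>A. \<forall>W\<in>C. W \<subseteq> U" if "C \<in> chains A" for C
  proof (cases "C = {}")
    case True
    have "{x} \<in> A" unfolding A_def using zirreducible_singleton x by auto
    thus ?thesis using True by blast
  next
    case False
    have CA: "C \<subseteq> A" and chain: "\<And>U V. U \<in> C \<Longrightarrow> V \<in> C \<Longrightarrow> U \<subseteq> V \<or> V \<subseteq> U"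
      using that unfolding chains_def chain_subset_def by auto
    have "zirreducible (zclosure (\<Union>C))"
      by (rule zirreducible_zclosure_Union_chain[OF False _ chain]) (use CA A_def in blast)
    moreover have "zclosure (\<Union>C) \<subseteq> X"
      by (rule zclosure_least[OF X]) (use CA A_def in blast)
    moreover have "x \<in> zclosure (\<Union>C)"
      using False CA zclosure_superset[of "\<Union>C"] unfolding A_def by blast
    ultimately have "zclosure (\<Union>C) \<in> A" unfolding A_def by blast
    thus ?thesis using zclosure_superset[of "\<Union>C"] by blast
  qed
  then obtain M where M: "M \<in> A" "\<forall>Z\<in>A. M \<subseteq> Z \<longrightarrow> Z = M"
    using Zorn_Lemma2[of A] by blast
  have "M \<in> irr_components X"
    using M unfolding irr_components_def A_def by blast
  with M(1) that show thesis unfolding A_def by blast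
qed

lemma nonzerodivisor_cancel:
  assumes X: "zclosed X" and g: "g \<in> polyfun" and h: "h \<in> polyfun"
    and g_nonzero: "\<forall>Y\<in>irr_components X. \<exists>y\<in>Y. g y \<noteq> 0"
    and gh: "\<forall>x\<in>X. g x * h x = 0"
  shows "\<forall>x\<in>X. h x = 0"
proof
  fix x assume "x \<in> X"
  then obtain Y where Y: "Y \<in> irr_components X" "x \<in> Y" using exists_irr_component[OF X] by blast
  have "\<forall>y\<in>Y. g y * h y = 0" using gh irr_components_subset[OF Y(1)] by blast
  hence "\<forall>y\<in>Y. h y = 0"
    using zirreducible_zero_product[OF irr_components_irreducible[OF Y(1)] g h] g_nonzero Y(1) by blast
  thus "h x = 0" using Y(2) by blast
qed

section \<open>Arithmetic of rational functions\<close>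

definition frac_eq :: "('k::field ^ 'n::finite) set \<Rightarrow> ('k,'n) fpair \<Rightarrow> ('k,'n) fpair \<Rightarrow> bool" where
  "frac_eq X p q \<longleftrightarrow> (\<forall>x\<in>X. fst p x * snd q x = fst q x * snd p x)"

definition polycls :: "('k::field ^ 'n::finite) set \<Rightarrow> ('k ^ 'n \<Rightarrow> 'k) \<Rightarrow> ('k,'n) ratfun" where
  "polycls X f = ratcls X (f, \<lambda>_. 1)"

lemma rat_zero_polycls: "rat_zero X = polycls X (\<lambda>_. 0)"
  unfolding rat_zero_def polycls_def ..

lemma rat_one_polycls: "rat_one X = polycls X (\<lambda>_. 1)"
  unfolding rat_one_def polycls_def ..

lemma ratfun_pairs_iff:
  "(f, g) \<in> ratfun_pairs X \<longleftrightarrow> f \<in> polyfun \<and> g \<in> polyfun \<and> (\<forall>Y\<in>irr_components X. \<exists>y\<in>Y. g y \<noteq> 0)"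
  unfolding ratfun_pairs_def by simp

lemma ratfun_pairsD:
  "p \<in> ratfun_pairs X \<Longrightarrow> fst p \<in> polyfun \<and> snd p \<in> polyfun \<and> (\<forall>Y\<in>irr_components X. \<exists>y\<in>Y. snd p y \<noteq> 0)"
  unfolding ratfun_pairs_def by auto

lemma ratfun_pairs_denom_one: "f \<in> polyfun \<Longrightarrow> (f, \<lambda>_. 1) \<in> ratfun_pairs X"
  unfolding ratfun_pairs_iff using polyfun_const irr_components_nonempty by fastforce

lemma irr_components_mult_nonvanishing:
  assumes "g \<in> polyfun" "h \<in> polyfun"
    and "\<forall>Y\<in>irr_components X. \<exists>y\<in>Y. g y \<noteq> 0" "\<forall>Y\<in>irr_components X. \<exists>y\<in>Y. h y \<noteq> 0"
  shows "\<forall>Y\<in>irr_components X. \<exists>y\<in>Y. g y * h y \<noteq> 0"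
proof
  fix Y assume Y: "Y \<in> irr_components X"
  have "\<not> (\<forall>y\<in>Y. g y = 0)" "\<not> (\<forall>y\<in>Y. h y = 0)" using assms(3,4) Y by auto
  thus "\<exists>y\<in>Y. g y * h y \<noteq> 0"
    using zirreducible_zero_product[OF irr_components_irreducible[OF Y] assms(1,2)] by blast
qed

lemma ratfun_pairs_mult:
  assumes "p \<in> ratfun_pairs X" "q \<in> ratfun_pairs X"
  shows "(\<lambda>x. fst p x * fst q x, \<lambda>x. snd p x * snd q x) \<in> ratfun_pairs X"
proof -
  have p: "fst p \<in> polyfun" "snd p \<in> polyfun" "\<forall>Y\<in>irr_components X. \<exists>y\<in>Y. snd p y \<noteq> 0"
    using ratfun_pairsD[OF assms(1)] by auto
  have q: "fst q \<in> polyfun" "snd q \<in> polyfun" "\<forall>Y\<in>irr_components X. \<exists>y\<in>Y. snd q y \<noteq> 0"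
    using ratfun_pairsD[OF assms(2)] by auto
  show ?thesis
    unfolding ratfun_pairs_iff
    using polyfun_mult[OF p(1) q(1)] polyfun_mult[OF p(2) q(2)]
      irr_components_mult_nonvanishing[OF p(2) q(2) p(3) q(3)] by blast
qed

lemma ratfun_pairs_add:
  assumes "p \<in> ratfun_pairs X" "q \<in> ratfun_pairs X"
  shows "(\<lambda>x. fst p x * snd q x + fst q x * snd p x, \<lambda>x. snd p x * snd q x) \<in> ratfun_pairs X"
proof -
  have p: "fst p \<in> polyfun" "snd p \<in> polyfun" "\<forall>Y\<in>irr_components X. \<exists>y\<in>Y. snd p y \<noteq> 0"
    using ratfun_pairsD[OF assms(1)] by auto
  have q: "fst q \<in> polyfun" "snd q \<in> polyfun" "\<forall>Y\<in>irr_components X. \<exists>y\<in>Y. snd q y \<noteq> 0"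
    using ratfun_pairsD[OF assms(2)] by auto
  show ?thesis
    unfolding ratfun_pairs_iff
    using polyfun_add[OF polyfun_mult[OF p(1) q(2)] polyfun_mult[OF q(1) p(2)]] polyfun_mult[OF p(2) q(2)]
      irr_components_mult_nonvanishing[OF p(2) q(2) p(3) q(3)] by blast
qed

lemma ratfun_pairs_smult: "p \<in> ratfun_pairs X \<Longrightarrow> (\<lambda>x. c * fst p x, snd p) \<in> ratfun_pairs X"
  using polyfun_smult unfolding ratfun_pairs_def by auto

lemma frac_eq_sym: "frac_eq X p q \<Longrightarrow> frac_eq X q p"
  unfolding frac_eq_def by (simp add: mult.commute)

lemma frac_eq_trans:
  assumes X: "zclosed X" and p: "p \<in> ratfun_pairs X" and q: "q \<in> ratfun_pairs X"
    and s: "s \<in> ratfun_pairs X" and pq: "frac_eq X p q" and qs: "frac_eq X q s"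
  shows "frac_eq X p s"
proof -
  let ?D = "\<lambda>x. fst p x * snd s x - fst s x * snd p x"
  have D: "?D \<in> polyfun"
    using ratfun_pairsD[OF p] ratfun_pairsD[OF s] by (simp add: polyfun_diff polyfun_mult)
  have "\<forall>x\<in>X. snd q x * ?D x = 0"
  proof
    fix x assume "x \<in> X"
    hence e1: "fst p x * snd q x = fst q x * snd p x" and e2: "fst q x * snd s x = fst s x * snd q x"
      using pq qs unfolding frac_eq_def by auto
    have "snd q x * ?D x = (fst p x * snd q x) * snd s x - fst s x * snd q x * snd p x"
      by (simp add: algebra_simps)
    also have "\<dots> = (fst q x * snd s x) * snd p x - fst s x * snd q x * snd p x"
      by (simp add: e1 algebra_simps)
    also have "\<dots> = 0" by (simp add: e2)
    finally show "snd q x * ?D x = 0" .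
  qed
  hence "\<forall>x\<in>X. ?D x = 0"
    using ratfun_pairsD[OF q] by (intro nonzerodivisor_cancel[OF X _ D]) auto
  thus ?thesis unfolding frac_eq_def by simp
qed

lemma ratcls_eqI:
  assumes X: "zclosed X" and "p \<in> ratfun_pairs X" "p' \<in> ratfun_pairs X" "frac_eq X p p'"
  shows "ratcls X p = ratcls X p'"
proof -
  have "frac_eq X p q \<longleftrightarrow> frac_eq X p' q" if "q \<in> ratfun_pairs X" for q
    using frac_eq_trans[OF X assms(3,2) that frac_eq_sym[OF assms(4)]]
      frac_eq_trans[OF X assms(2,3) that assms(4)] by blast
  thus ?thesis unfolding ratcls_def frac_eq_def[symmetric] by auto
qed

lemma ratcls_self: "p \<in> ratfun_pairs X \<Longrightarrow> p \<in> ratcls X p"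
  unfolding ratcls_def by auto

lemma ratcls_memD: "q \<in> ratcls X p \<Longrightarrow> q \<in> ratfun_pairs X \<and> frac_eq X p q"
  unfolding ratcls_def frac_eq_def by auto

lemma ratfunsI: "p \<in> ratfun_pairs X \<Longrightarrow> ratcls X p \<in> ratfuns X"
  unfolding ratfuns_def by blast

lemma rep_mem: "a \<in> ratfuns X \<Longrightarrow> rep a \<in> a"
  unfolding ratfuns_def rep_def by (auto intro: someI ratcls_self)

lemma rep_ratfuns:
  assumes X: "zclosed X" and a: "a \<in> ratfuns X"
  shows "rep a \<in> ratfun_pairs X" "a = ratcls X (rep a)"
proof -
  obtain p where p: "p \<in> ratfun_pairs X" "a = ratcls X p"
    using a unfolding ratfuns_def by blast
  have "rep a \<in> ratcls X p" using rep_mem[OF a] p(2) by simp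
  hence rep: "rep a \<in> ratfun_pairs X" "frac_eq X p (rep a)" using ratcls_memD by blast+
  show "rep a \<in> ratfun_pairs X" by (rule rep(1))
  show "a = ratcls X (rep a)" using ratcls_eqI[OF X p(1) rep] p(2) by simp
qed

lemma rat_add_ratfuns: "zclosed X \<Longrightarrow> a \<in> ratfuns X \<Longrightarrow> b \<in> ratfuns X \<Longrightarrow> rat_add X a b \<in> ratfuns X"
  unfolding rat_add_def by (rule ratfunsI, rule ratfun_pairs_add) (auto intro: rep_ratfuns)

lemma rat_smult_ratfuns: "zclosed X \<Longrightarrow> a \<in> ratfuns X \<Longrightarrow> rat_smult X c a \<in> ratfuns X"
  unfolding rat_smult_def
  by (rule ratfunsI, rule ratfun_pairs_smult[where p = "rep a", simplified]) (auto intro: rep_ratfuns)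

lemma polycls_ratfuns: "f \<in> polyfun \<Longrightarrow> polycls X f \<in> ratfuns X"
  unfolding polycls_def by (rule ratfunsI, rule ratfun_pairs_denom_one)

lemma rep_polycls:
  assumes "f \<in> polyfun"
  shows "rep (polycls X f) \<in> ratfun_pairs X"
    and "\<forall>x\<in>X. fst (rep (polycls X f)) x = f x * snd (rep (polycls X f)) x"
proof -
  have "rep (polycls X f) \<in> ratcls X (f, \<lambda>_. 1)"
    using rep_mem[OF polycls_ratfuns[OF assms]] unfolding polycls_def .
  from ratcls_memD[OF this] show "rep (polycls X f) \<in> ratfun_pairs X"
    and "\<forall>x\<in>X. fst (rep (polycls X f)) x = f x * snd (rep (polycls X f)) x"
    unfolding frac_eq_def by auto
qed

lemma polycls_add:
  assumes X: "zclosed X" and f: "f \<in> polyfun" and g: "g \<in> polyfun"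
  shows "rat_add X (polycls X f) (polycls X g) = polycls X (\<lambda>x. f x + g x)"
proof -
  let ?a = "rep (polycls X f)" and ?b = "rep (polycls X g)"
  have "ratcls X (\<lambda>x. fst ?a x * snd ?b x + fst ?b x * snd ?a x, \<lambda>x. snd ?a x * snd ?b x)
      = ratcls X (\<lambda>x. f x + g x, \<lambda>_. 1)"
    by (rule ratcls_eqI[OF X ratfun_pairs_add[OF rep_polycls(1)[OF f] rep_polycls(1)[OF g]] ratfun_pairs_denom_one[OF polyfun_add[OF f g]]])
       (use rep_polycls(2)[OF f] rep_polycls(2)[OF g] in \<open>auto simp: frac_eq_def algebra_simps\<close>)
  thus ?thesis unfolding rat_add_def polycls_def .
qed

lemma polycls_mult:
  assumes X: "zclosed X" and f: "f \<in> polyfun" and g: "g \<in> polyfun"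
  shows "rat_mult X (polycls X f) (polycls X g) = polycls X (\<lambda>x. f x * g x)"
proof -
  let ?a = "rep (polycls X f)" and ?b = "rep (polycls X g)"
  have "ratcls X (\<lambda>x. fst ?a x * fst ?b x, \<lambda>x. snd ?a x * snd ?b x) = ratcls X (\<lambda>x. f x * g x, \<lambda>_. 1)"
    by (rule ratcls_eqI[OF X ratfun_pairs_mult[OF rep_polycls(1)[OF f] rep_polycls(1)[OF g]] ratfun_pairs_denom_one[OF polyfun_mult[OF f g]]])
       (use rep_polycls(2)[OF f] rep_polycls(2)[OF g] in \<open>auto simp: frac_eq_def algebra_simps\<close>)
  thus ?thesis unfolding rat_mult_def polycls_def .
qed

lemma polycls_smult:
  assumes X: "zclosed X" and f: "f \<in> polyfun"
  shows "rat_smult X c (polycls X f) = polycls X (\<lambda>x. c * f x)"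
proof -
  let ?a = "rep (polycls X f)"
  have "ratcls X (\<lambda>x. c * fst ?a x, snd ?a) = ratcls X (\<lambda>x. c * f x, \<lambda>_. 1)"
    by (rule ratcls_eqI[OF X ratfun_pairs_smult[OF rep_polycls(1)[OF f]] ratfun_pairs_denom_one[OF polyfun_smult[OF f]]])
       (use rep_polycls(2)[OF f] in \<open>auto simp: frac_eq_def algebra_simps\<close>)
  thus ?thesis unfolding rat_smult_def polycls_def .
qed

lemma polycls_max_ideal:
  assumes "f \<in> polyfun" "f 0 = 0"
  shows "polycls X f \<in> max_ideal X"
proof -
  have "(f, \<lambda>_. 1) \<in> polycls X f"
    unfolding polycls_def by (rule ratcls_self[OF ratfun_pairs_denom_one[OF assms(1)]])
  then show ?thesis
    unfolding max_ideal_def mem_Collect_eq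
    by (intro conjI polycls_ratfuns[OF assms(1)] bexI[of _ "(f, \<lambda>_. 1)"]) (simp_all add: assms(2))
qed

lemma polycls_loc_ring:
  assumes "f \<in> polyfun"
  shows "polycls X f \<in> loc_ring X"
proof -
  have "(f, \<lambda>_. 1) \<in> polycls X f"
    unfolding polycls_def by (rule ratcls_self[OF ratfun_pairs_denom_one[OF assms]])
  then show ?thesis
    unfolding loc_ring_def mem_Collect_eq
    by (intro conjI polycls_ratfuns[OF assms] bexI[of _ "(f, \<lambda>_. 1)"]) simp_all
qed

section \<open>Monomials and powers of the maximal ideal\<close>

lemma monom_in_mprods:
  fixes X :: "('k::field ^ 'n::finite) set"
  assumes X: "zclosed X"
  shows "tdeg \<beta> = j \<Longrightarrow> polycls X (monom_fun \<beta>) \<in> mprods X j"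
proof (induction j arbitrary: \<beta>)
  case 0
  hence "monom_fun \<beta> = (\<lambda>_::'k^'n. 1::'k)" by (simp add: tdeg_eq_0_iff monom_fun_zero)
  thus ?case by (simp add: rat_one_polycls)
next
  case (Suc j)
  then obtain i where i: "\<beta> i > 0" by (metis gr0I nat.distinct(1) tdeg_eq_0_iff)
  define \<beta>' where "\<beta>' = \<beta>(i := \<beta> i - 1)"
  have \<beta>: "\<beta> = (\<lambda>k. unit_exp i k + \<beta>' k)"
    unfolding \<beta>'_def by (rule unit_exp_split[where \<alpha> = \<beta>, OF i])
  have "tdeg \<beta>' = j" using Suc.prems by (subst (asm) \<beta>) (simp add: tdeg_add tdeg_unit_exp)
  hence "polycls X (monom_fun \<beta>') \<in> mprods X j" by (rule Suc.IH)
  moreover have "polycls X (\<lambda>x. x $ i) \<in> max_ideal X"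
    by (rule polycls_max_ideal[OF polyfun_coord]) simp
  moreover have "monom_fun \<beta> = (\<lambda>x::'k^'n. x $ i * monom_fun \<beta>' x)"
    by (subst \<beta>) (simp add: monom_fun_add monom_fun_unit_exp)
  hence "polycls X (monom_fun \<beta>) = rat_mult X (polycls X (\<lambda>x. x $ i)) (polycls X (monom_fun \<beta>'))"
    using polycls_mult[OF X polyfun_coord polyfun_monom] by simp
  ultimately show ?case by auto
qed

lemma monom_in_max_ideal_pow:
  fixes X :: "('k::field ^ 'n::finite) set"
  assumes X: "zclosed X" and "r \<le> tdeg \<alpha>"
  shows "polycls X (monom_fun \<alpha>) \<in> max_ideal_pow X r"
proof -
  obtain \<beta> \<gamma> where \<alpha>: "\<alpha> = (\<lambda>i. \<beta> i + \<gamma> i)" and \<beta>: "tdeg \<beta> = r"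
    using exponent_split_tdeg[OF assms(2)] .
  have "polycls X (monom_fun \<alpha>) = rat_mult X (polycls X (monom_fun \<gamma>)) (polycls X (monom_fun \<beta>))"
    unfolding \<alpha> monom_fun_add polycls_mult[OF X polyfun_monom polyfun_monom] by (simp add: mult.commute)
  also have "\<dots> \<in> ideal_gen X (mprods X r)"
    by (rule ideal_gen.mult[OF polycls_loc_ring[OF polyfun_monom] ideal_gen.base[OF monom_in_mprods[OF X \<beta>]]])
  finally show ?thesis unfolding max_ideal_pow_def .
qed

section \<open>Products of the degree-filtered pieces\<close>

definition polycls_lincomb_closed :: "('k::field ^ 'n::finite) set \<Rightarrow> ('k,'n) ratfun set \<Rightarrow> bool" where
  "polycls_lincomb_closed X Q \<longleftrightarrow> polycls X (\<lambda>_. 0) \<in> Q \<and>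
     (\<forall>f g. f \<in> polyfun \<longrightarrow> g \<in> polyfun \<longrightarrow> polycls X f \<in> Q \<longrightarrow> polycls X g \<in> Q \<longrightarrow>
        polycls X (\<lambda>x. f x + g x) \<in> Q) \<and>
     (\<forall>f c. f \<in> polyfun \<longrightarrow> polycls X f \<in> Q \<longrightarrow> polycls X (\<lambda>x. c * f x) \<in> Q)"

lemma polycls_lincomb_closed_add:
  "polycls_lincomb_closed X Q \<Longrightarrow> f \<in> polyfun \<Longrightarrow> g \<in> polyfun \<Longrightarrow> polycls X f \<in> Q \<Longrightarrow>
    polycls X g \<in> Q \<Longrightarrow> polycls X (\<lambda>x. f x + g x) \<in> Q"
  unfolding polycls_lincomb_closed_def by blast

lemma polycls_lincomb_closed_smult:
  "polycls_lincomb_closed X Q \<Longrightarrow> f \<in> polyfun \<Longrightarrow> polycls X f \<in> Q \<Longrightarrow> polycls X (\<lambda>x. c * f x) \<in> Q"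
  unfolding polycls_lincomb_closed_def by blast

lemma ideal_polycls_lincomb_closed:
  assumes X: "zclosed X" and I: "is_ideal X I"
  shows "polycls_lincomb_closed X I"
  unfolding polycls_lincomb_closed_def
proof (intro conjI allI impI)
  show "polycls X (\<lambda>_. 0) \<in> I" using I unfolding is_ideal_def rat_zero_polycls by blast
next
  fix f g assume f: "f \<in> polyfun" and g: "g \<in> polyfun" and "polycls X f \<in> I" "polycls X g \<in> I"
  hence "rat_add X (polycls X f) (polycls X g) \<in> I" using I unfolding is_ideal_def by blast
  thus "polycls X (\<lambda>x. f x + g x) \<in> I" using polycls_add[OF X f g] by simp
next
  fix f c assume f: "f \<in> polyfun" and "polycls X f \<in> I"
  hence "rat_mult X (polycls X (\<lambda>_. c)) (polycls X f) \<in> I"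
    using I polycls_loc_ring[OF polyfun_const] unfolding is_ideal_def by blast
  thus "polycls X (\<lambda>x. c * f x) \<in> I" using polycls_mult[OF X polyfun_const f] by simp
qed

lemma rspan_polycls_lincomb_closed:
  assumes X: "zclosed X"
  shows "polycls_lincomb_closed X (rspan X S)"
  unfolding polycls_lincomb_closed_def
proof (intro conjI allI impI)
  show "polycls X (\<lambda>_. 0) \<in> rspan X S" using rspan.zero by (metis rat_zero_polycls)
next
  fix f g assume "f \<in> polyfun" "g \<in> polyfun" "polycls X f \<in> rspan X S" "polycls X g \<in> rspan X S"
  thus "polycls X (\<lambda>x. f x + g x) \<in> rspan X S" using rspan.add polycls_add[OF X] by metis
next
  fix f c assume "f \<in> polyfun" "polycls X f \<in> rspan X S"
  thus "polycls X (\<lambda>x. c * f x) \<in> rspan X S" using rspan.smult polycls_smult[OF X] by metis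
qed

lemma polycls_lincomb_closed_sum_monoms:
  assumes Q: "polycls_lincomb_closed X Q" and "finite T"
    and monoms: "\<forall>t\<in>T. polycls X (monom_fun t) \<in> Q"
  shows "polycls X (\<lambda>x. \<Sum>t\<in>T. c t * monom_fun t x) \<in> Q"
  using assms(2) monoms
proof (induction T rule: finite_induct)
  case empty
  thus ?case using Q unfolding polycls_lincomb_closed_def by simp
next
  case (insert a T)
  have "polycls X (\<lambda>x. c a * monom_fun a x + (\<Sum>t\<in>T. c t * monom_fun t x)) \<in> Q"
    using insert.IH insert.prems
    by (intro polycls_lincomb_closed_add[OF Q] polycls_lincomb_closed_smult[OF Q] polyfun_smult
        polyfun_monom polyfun_sum_monoms insert.hyps(1)) simp_all
  thus ?case using insert.hyps by simp
qed

lemma A_deg_iff: "a \<in> A_deg X m \<longleftrightarrow> (\<exists>p. p \<in> polyfun_deg m \<and> a = polycls X p)"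
  unfolding A_deg_def polycls_def by blast

lemma rspan_subset: "S \<subseteq> rspan X T \<Longrightarrow> rspan X S \<subseteq> rspan X T"
proof
  fix a assume "S \<subseteq> rspan X T" "a \<in> rspan X S"
  thus "a \<in> rspan X T" by (induction rule: rspan.induct[OF \<open>a \<in> rspan X S\<close>]) (auto intro: rspan.intros)
qed

lemma sprod_I_deg_A_deg_subset:
  assumes X: "zclosed X" and I: "is_ideal X I"
  shows "sprod X (I_deg X I m) (A_deg X k) \<subseteq> rspan X (I_deg X I (m + k))"
  unfolding sprod_def
proof (rule rspan_subset, safe)
  fix a b assume a: "a \<in> I_deg X I m" and b: "b \<in> A_deg X k"
  obtain p where p: "p \<in> polyfun_deg m" "a = polycls X p"
    using a unfolding I_deg_def Int_iff A_deg_iff by blast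
  obtain q where q: "q \<in> polyfun_deg k" "b = polycls X q"
    using b unfolding A_deg_iff by blast
  have p': "p \<in> polyfun" and q': "q \<in> polyfun" using p(1) q(1) by (auto intro: polyfun_deg_polyfun)
  have ab: "rat_mult X a b = polycls X (\<lambda>x. p x * q x)"
    unfolding p(2) q(2) by (rule polycls_mult[OF X p' q'])
  have "rat_mult X b a \<in> I"
    using I a q(2) polycls_loc_ring[OF q'] unfolding is_ideal_def I_deg_def by blast
  moreover have "rat_mult X b a = rat_mult X a b"
    using ab polycls_mult[OF X q' p'] unfolding p(2) q(2) by (simp add: mult.commute)
  ultimately have "rat_mult X a b \<in> I" by simp
  moreover have "rat_mult X a b \<in> A_deg X (m + k)"
    unfolding ab A_deg_iff using polyfun_deg_mult[OF p(1) q(1)] by blast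
  ultimately show "rat_mult X a b \<in> rspan X (I_deg X I (m + k))"
    unfolding I_deg_def by (blast intro: rspan.base)
qed

lemma monom_in_I_deg_times_A_deg:
  fixes X :: "('k::field ^ 'n::finite) set"
  assumes X: "zclosed X" and I: "max_ideal_pow X r \<subseteq> I"
    and "r \<le> m" "r \<le> tdeg t" "tdeg t \<le> m + k"
  shows "polycls X (monom_fun t) \<in> {rat_mult X a b | a b. a \<in> I_deg X I m \<and> b \<in> A_deg X k}"
proof -
  obtain \<beta> \<gamma> where t: "t = (\<lambda>i. \<beta> i + \<gamma> i)" and \<beta>: "tdeg \<beta> = min m (tdeg t)"
    using exponent_split_tdeg[of "min m (tdeg t)" t] by auto
  have "tdeg \<gamma> \<le> k" using assms(5) \<beta> unfolding t tdeg_add by linarith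
  hence "polycls X (monom_fun \<gamma>) \<in> A_deg X k"
    unfolding A_deg_iff using polyfun_deg_monom by blast
  moreover have "polycls X (monom_fun \<beta>) \<in> I"
    using monom_in_max_ideal_pow[OF X, of r \<beta>] I \<beta> assms(3,4) by auto
  moreover have "polycls X (monom_fun \<beta>) \<in> A_deg X m"
    unfolding A_deg_iff using polyfun_deg_monom[of \<beta> m] \<beta> by auto
  moreover have "polycls X (monom_fun t) = rat_mult X (polycls X (monom_fun \<beta>)) (polycls X (monom_fun \<gamma>))"
    unfolding t monom_fun_add polycls_mult[OF X polyfun_monom polyfun_monom] ..
  ultimately show ?thesis unfolding I_deg_def Int_iff mem_Collect_eq by blast
qed

lemma I_deg_subset_sprod:
  fixes X :: "('k::field ^ 'n::finite) set"
  assumes X: "zclosed X" and I: "is_ideal X I" and mI: "max_ideal_pow X r \<subseteq> I" and "r \<le> m"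
  shows "I_deg X I (m + k) \<subseteq> sprod X (I_deg X I m) (A_deg X k)"
proof
  fix a assume a: "a \<in> I_deg X I (m + k)"
  define P where "P = {rat_mult X a b | a b. a \<in> I_deg X I m \<and> b \<in> A_deg X k}"
  obtain p where p: "p \<in> polyfun_deg (m + k)" "a = polycls X p" and "polycls X p \<in> I"
    using a unfolding I_deg_def Int_iff A_deg_iff by blast
  obtain q c T where q: "q \<in> polyfun_deg m" and T: "finite T" "\<forall>t\<in>T. r \<le> tdeg t \<and> tdeg t \<le> m + k"
    and pqh: "p = (\<lambda>x. q x + (\<Sum>t\<in>T. c t * monom_fun t x))"
    using polyfun_deg_split_low_high[OF \<open>r \<le> m\<close> p(1)] by blast
  let ?h = "\<lambda>x. \<Sum>t\<in>T. c t * monom_fun t x"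
  have q': "q \<in> polyfun" and h': "?h \<in> polyfun"
    using polyfun_deg_polyfun[OF q] polyfun_sum_monoms[OF T(1)] .
  have Ilin: "polycls_lincomb_closed X I" by (rule ideal_polycls_lincomb_closed[OF X I])
  have "\<forall>t\<in>T. polycls X (monom_fun t) \<in> I"
  proof
    fix t assume "t \<in> T"
    hence "r \<le> tdeg t" using T(2) by blast
    thus "polycls X (monom_fun t) \<in> I" using monom_in_max_ideal_pow[OF X] mI by blast
  qed
  hence "polycls X ?h \<in> I" by (rule polycls_lincomb_closed_sum_monoms[OF Ilin T(1)])
  hence "polycls X (\<lambda>x. p x + (-1) * ?h x) \<in> I"
    by (intro polycls_lincomb_closed_add[OF Ilin polyfun_deg_polyfun[OF p(1)] polyfun_smult[OF h']
        \<open>polycls X p \<in> I\<close> polycls_lincomb_closed_smult[OF Ilin h']])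
  moreover have "(\<lambda>x. p x + (-1) * ?h x) = q" by (simp add: pqh)
  ultimately have "polycls X q \<in> I" by simp
  hence "polycls X q \<in> I_deg X I m"
    unfolding I_deg_def Int_iff A_deg_iff using q by blast
  moreover have "polycls X q = rat_mult X (polycls X q) (polycls X (\<lambda>_. 1))"
    using polycls_mult[OF X q' polyfun_const, of 1] by simp
  moreover have "polycls X (\<lambda>_. 1) \<in> A_deg X k"
    unfolding A_deg_iff using polyfun_deg_const by blast
  ultimately have "polycls X q \<in> P" unfolding P_def by blast
  hence q_span: "polycls X q \<in> rspan X P" by (rule rspan.base)
  have "\<forall>t\<in>T. polycls X (monom_fun t) \<in> rspan X P"
  proof
    fix t assume "t \<in> T"
    hence "polycls X (monom_fun t) \<in> P"
      unfolding P_def using monom_in_I_deg_times_A_deg[OF X mI \<open>r \<le> m\<close>] T(2) by blast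
    thus "polycls X (monom_fun t) \<in> rspan X P" by (rule rspan.base)
  qed
  hence h_span: "polycls X ?h \<in> rspan X P"
    by (rule polycls_lincomb_closed_sum_monoms[OF rspan_polycls_lincomb_closed[OF X] T(1)])
  have "a = rat_add X (polycls X q) (polycls X ?h)"
    unfolding p(2) pqh by (rule polycls_add[OF X q' h', symmetric])
  hence "a \<in> rspan X P" using rspan.add[OF q_span h_span] by simp
  thus "a \<in> sprod X (I_deg X I m) (A_deg X k)" unfolding sprod_def P_def .
qed

lemma sprod_I_deg_A_deg:
  fixes X :: "('k::field ^ 'n::finite) set"
  assumes "zclosed X" "is_ideal X I" "max_ideal_pow X r \<subseteq> I" "r \<le> m"
  shows "sprod X (I_deg X I m) (A_deg X k) = rspan X (I_deg X I (m + k))"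
proof
  show "sprod X (I_deg X I m) (A_deg X k) \<subseteq> rspan X (I_deg X I (m + k))"
    using sprod_I_deg_A_deg_subset[OF assms(1,2)] .
  show "rspan X (I_deg X I (m + k)) \<subseteq> sprod X (I_deg X I m) (A_deg X k)"
    using I_deg_subset_sprod[OF assms] rspan_subset unfolding sprod_def by blast
qed

lemma rspan_subset_ratfuns:
  assumes X: "zclosed X" and "S \<subseteq> ratfuns X"
  shows "rspan X S \<subseteq> ratfuns X"
proof
  fix a assume "a \<in> rspan X S"
  thus "a \<in> ratfuns X"
  proof (induction rule: rspan.induct)
    case zero
    show ?case unfolding rat_zero_polycls by (rule polycls_ratfuns[OF polyfun_const])
  next
    case (base s) thus ?case using assms(2) by blast
  next
    case (add a b) thus ?case using rat_add_ratfuns[OF X] by blast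
  next
    case (smult a c) thus ?case using rat_smult_ratfuns[OF X] by blast
  qed
qed

lemma rspan_one_in_KX:
  assumes X: "zclosed X"
  shows "rspan X {rat_one X} \<in> KX X"
proof -
  let ?N = "rspan X {rat_one X}"
  have one: "(\<lambda>_. 1, \<lambda>_. 1) \<in> rat_one X"
    unfolding rat_one_def by (rule ratcls_self[OF ratfun_pairs_denom_one[OF polyfun_const]])
  have "rat_one X \<in> ratfuns X"
    unfolding rat_one_polycls by (rule polycls_ratfuns[OF polyfun_const])
  hence "?N \<subseteq> ratfuns X" by (intro rspan_subset_ratfuns[OF X]) simp
  moreover have "rspan X ?N = ?N"
    using rspan_subset[of ?N X "{rat_one X}"] rspan.base[of _ ?N X] by blast
  moreover have "\<exists>F. finite F \<and> F \<subseteq> ?N \<and> rspan X F = ?N"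
    by (rule exI[of _ "{rat_one X}"]) (auto intro: rspan.base)
  moreover have "\<exists>a\<in>?N. nonzero_on Y a" if Y: "Y \<in> irr_components X" for Y
  proof -
    obtain y where "y \<in> Y" using irr_components_nonempty[OF Y] by blast
    hence "nonzero_on Y (rat_one X)"
      unfolding nonzero_on_def by (intro bexI[OF _ one]) auto
    thus ?thesis using rspan.base[of "rat_one X" "{rat_one X}" X] by blast
  qed
  ultimately show ?thesis unfolding KX_def by blast
qed

theorem corollary2p5:
  fixes X :: "('k::alg_closed_field ^ 'N::finite) set"
    and n :: nat
    and I :: "('k,'N) ratfun set"
    and r :: nat
  assumes "affine_variety X"
    and "\<forall>Y\<in>irr_components X. has_dim Y n"
    and "0 \<in> X"
    and "\<forall>Y\<in>irr_components X. 0 \<in> Y"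
    and "is_primary_for X (max_ideal X) I"
    and "r > 0"
    and "max_ideal_pow X r \<subseteq> I"
  shows "\<forall>k m. k \<ge> r \<and> m \<ge> r \<longrightarrow>
           G_eq X (I_deg X I m) (A_deg X m) (I_deg X I k) (A_deg X k)"
proof (intro allI impI)
  fix k m assume "k \<ge> r \<and> m \<ge> r"
  have X: "zclosed X" using assms(1) unfolding affine_variety_def by blast
  have I: "is_ideal X I" using assms(5) unfolding is_primary_for_def by blast
  have "sprod X (I_deg X I m) (A_deg X k) = sprod X (I_deg X I k) (A_deg X m)"
    using sprod_I_deg_A_deg[OF X I assms(7)] \<open>k \<ge> r \<and> m \<ge> r\<close> by (simp add: add.commute)
  thus "G_eq X (I_deg X I m) (A_deg X m) (I_deg X I k) (A_deg X k)"
    unfolding G_eq_def using rspan_one_in_KX[OF X] by auto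
qed

end
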